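(* Let $\mathcal{P}$ be a probability distribution on $\mathbb{R}^d$ whose support is contained in the unit ball $\{\mathbf{z}:\|\mathbf{z}\|\le 1\}$, let $\varphi:\mathbb{R}\to\mathbb{R}$ be twice differentiable with $|\varphi''(\alpha)|\le c\,|\varphi'(\alpha)|$ for all $\alpha$, for some constant $c>0$, and let $f(\mathbf{w})=\mathbb{E}_{\mathbf{z}\sim\mathcal{P}}[\varphi(\mathbf{w}^\top\mathbf{z})]$ with stochastic gradients $\nabla f_{\mathbf{z}}(\mathbf{w})=\varphi'(\mathbf{w}^\top\mathbf{z})\,\mathbf{z}$ (so that $\nabla^2 f(\mathbf{w})=\mathbb{E}_{\mathbf{z}}[\varphi''(\mathbf{w}^\top\mathbf{z})\mathbf{z}\mathbf{z}^\top]$). Let $\mathbf{w}\in\mathbb{R}^d$ and let $\mathbf{v}$ be a unit-length eigenvector of $\nabla^2 f(\mathbf{w})$ with eigenvalue $\lambda<0$. Then $\mathbb{E}_{\mathbf{z}}[(\nabla f_{\mathbf{z}}(\mathbf{w})^\top\mathbf{v})^2]\ge(\lambda/c)^2$. *)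

theory Defs
  imports "HOL-Probability.Probability"
begin

definition outer :: "real^'n \<Rightarrow> real^'n^'n" where
  "outer z = (\<chi> i j. z $ i * z $ j)"

text \<open>Hessian of f(w) = E_z[phi(w^T z)], given (as in the paper) by
  E_z[phi''(w^T z) z z^T], with phi2 the second derivative of phi.\<close>
definition glm_hessian :: "(real^'n::finite) measure \<Rightarrow> (real \<Rightarrow> real) \<Rightarrow> real^'n \<Rightarrow> real^'n^'n" where
  "glm_hessian M phi2 w = (\<integral> z. phi2 (w \<bullet> z) *\<^sub>R outer z \<partial>M)"

definition stoch_grad :: "(real \<Rightarrow> real) \<Rightarrow> real^'n \<Rightarrow> real^'n \<Rightarrow> real^'n" where
  "stoch_grad phi1 z w = phi1 (w \<bullet> z) *\<^sub>R z"

end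

theory Submission
  imports Defs
begin

text \<open>Testing the Hessian against the eigenvector gives
  \<open>\<lambda> = E[\<phi>''(w\<^sup>T z) (z\<^sup>T v)\<^sup>2]\<close>. The curvature bound and \<open>|z\<^sup>T v| \<le> 1\<close> turn this into
  \<open>|\<lambda>| \<le> c E[|\<phi>'(w\<^sup>T z) z\<^sup>T v|] = c E[|\<nabla>f\<^sub>z(w)\<^sup>T v|]\<close>, and Jensen's inequality
  \<open>(E X)\<^sup>2 \<le> E[X\<^sup>2]\<close> finishes the proof.\<close>

lemma outer_mult_vec: "outer z *v v = (z \<bullet> v) *\<^sub>R (z::real^'n)"
  by (simp add: outer_def matrix_vector_mult_def vec_eq_iff inner_vec_def sum_distrib_left
      sum_distrib_right mult.commute mult.left_commute)

lemma inner_outer_mult_vec: "v \<bullet> (outer z *v v) = (z \<bullet> v)\<^sup>2"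
  by (simp add: outer_mult_vec power2_eq_square inner_commute)

lemma stoch_grad_inner: "stoch_grad phi1 z w \<bullet> v = phi1 (w \<bullet> z) * (z \<bullet> v)"
  by (simp add: stoch_grad_def)

lemma continuous_on_stoch_grad_inner:
  assumes "continuous_on UNIV phi1"
  shows "continuous_on UNIV (\<lambda>z. stoch_grad phi1 z w \<bullet> v)"
  unfolding stoch_grad_inner
  by (intro continuous_on_compose2[OF assms] continuous_intros) auto

lemma integrable_glm_hessian_integrand:
  assumes "glm_hessian M phi2 w \<noteq> 0"
  shows "integrable M (\<lambda>z. phi2 (w \<bullet> z) *\<^sub>R outer z)"
  using assms not_integrable_integral_eq unfolding glm_hessian_def by blast

lemma bounded_linear_quadratic_form: "bounded_linear (\<lambda>A::real^'n^'n. v \<bullet> (A *v v))"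
  unfolding linear_conv_bounded_linear[symmetric]
  by (intro linearI) (auto simp: matrix_vector_mult_add_rdistrib inner_add_right
      scaleR_matrix_vector_assoc[symmetric])

lemma
  assumes "integrable M (\<lambda>z. phi2 (w \<bullet> z) *\<^sub>R outer z)"
  shows integrable_glm_curvature: "integrable M (\<lambda>z. phi2 (w \<bullet> z) * (z \<bullet> v)\<^sup>2)"
    and glm_hessian_quadratic_form:
      "v \<bullet> (glm_hessian M phi2 w *v v) = (\<integral> z. phi2 (w \<bullet> z) * (z \<bullet> v)\<^sup>2 \<partial>M)"
  using integrable_bounded_linear[OF bounded_linear_quadratic_form assms, of v]
    integral_bounded_linear[OF bounded_linear_quadratic_form assms, of v]
  by (simp_all add: glm_hessian_def scaleR_matrix_vector_assoc[symmetric] inner_outer_mult_vec)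

lemma integrable_continuous_on_unit_ball:
  fixes M :: "'a::euclidean_space measure"
    and f :: "'a \<Rightarrow> 'b::{banach, second_countable_topology}"
  assumes "prob_space M" and "sets M = sets borel" and "AE z in M. norm z \<le> 1" and "continuous_on UNIV f"
  shows "integrable M f"
proof -
  obtain B where B: "\<And>z. z \<in> cball 0 1 \<Longrightarrow> norm (f z) \<le> B"
    using continuous_on_compact_bound[OF compact_cball continuous_on_subset[OF assms(4)]] by blast
  show ?thesis
  proof (rule finite_measure.integrable_const_bound[where B = B])
    show "AE z in M. norm (f z) \<le> B"
      using assms(3) by eventually_elim (simp add: B)
    show "f \<in> borel_measurable M"
      using borel_measurable_continuous_onI[OF assms(4)] measurable_cong_sets[OF assms(2) refl]
      by blast
    show "finite_measure M"
      using assms(1) by (rule prob_space.finite_measure)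
  qed
qed

lemma (in prob_space) square_integral_le_integral_square:
  fixes X :: "'a \<Rightarrow> real"
  assumes "integrable M X" and "integrable M (\<lambda>x. (X x)\<^sup>2)"
  shows "(\<integral> x. X x \<partial>M)\<^sup>2 \<le> (\<integral> x. (X x)\<^sup>2 \<partial>M)"
  using variance_eq[OF assms] variance_positive[of X] by simp

lemma abs_integral_curvature_le:
  fixes M :: "(real^'n) measure" and v w :: "real^'n"
  assumes "prob_space M" and "sets M = sets borel" and "AE z in M. norm z \<le> 1"
    and "continuous_on UNIV phi1"
    and "0 \<le> c" and "\<And>x. \<bar>phi2 x\<bar> \<le> c * \<bar>phi1 x\<bar>"
    and "norm v = 1"
    and "integrable M (\<lambda>z. phi2 (w \<bullet> z) * (z \<bullet> v)\<^sup>2)"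
  shows "\<bar>\<integral> z. phi2 (w \<bullet> z) * (z \<bullet> v)\<^sup>2 \<partial>M\<bar> \<le> c * (\<integral> z. \<bar>stoch_grad phi1 z w \<bullet> v\<bar> \<partial>M)"
proof -
  have pointwise: "AE z in M. \<bar>phi2 (w \<bullet> z) * (z \<bullet> v)\<^sup>2\<bar> \<le> c * \<bar>stoch_grad phi1 z w \<bullet> v\<bar>"
    using assms(3)
  proof eventually_elim
    case (elim z)
    have "\<bar>z \<bullet> v\<bar> \<le> 1"
      using Cauchy_Schwarz_ineq2[of z v] elim assms(7) by simp
    have "\<bar>phi2 (w \<bullet> z) * (z \<bullet> v)\<^sup>2\<bar> = \<bar>phi2 (w \<bullet> z)\<bar> * \<bar>z \<bullet> v\<bar> * \<bar>z \<bullet> v\<bar>"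
      by (simp add: abs_mult power2_eq_square)
    also have "\<dots> \<le> c * \<bar>phi1 (w \<bullet> z)\<bar> * \<bar>z \<bullet> v\<bar> * 1"
      using assms(5,6) \<open>\<bar>z \<bullet> v\<bar> \<le> 1\<close> by (intro mult_mono) auto
    finally show ?case
      by (simp add: stoch_grad_inner abs_mult mult.assoc)
  qed
  have "integrable M (\<lambda>z. \<bar>stoch_grad phi1 z w \<bullet> v\<bar>)"
    by (intro integrable_continuous_on_unit_ball[OF assms(1-3)] continuous_intros
        continuous_on_stoch_grad_inner assms(4))
  then have "(\<integral> z. \<bar>phi2 (w \<bullet> z) * (z \<bullet> v)\<^sup>2\<bar> \<partial>M) \<le> (\<integral> z. c * \<bar>stoch_grad phi1 z w \<bullet> v\<bar> \<partial>M)"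
    using assms(8) pointwise by (intro integral_mono_AE) auto
  then show ?thesis
    by (simp add: order_trans[OF integral_abs_bound])
qed

theorem lemma4:
  fixes M :: "(real^'n) measure"
    and phi phi1 phi2 :: "real \<Rightarrow> real"
    and c lam :: real and w v :: "real^'n"
  assumes "prob_space M"
    and "sets M = sets borel"
    and "AE z in M. norm z \<le> 1"
    and "\<And>x. (phi has_real_derivative phi1 x) (at x)"
    and "\<And>x. (phi1 has_real_derivative phi2 x) (at x)"
    and "c > 0"
    and "\<And>x. \<bar>phi2 x\<bar> \<le> c * \<bar>phi1 x\<bar>"
    and "norm v = 1"
    and "glm_hessian M phi2 w *v v = lam *\<^sub>R v"
    and "lam < 0"
  shows "(\<integral> z. (stoch_grad phi1 z w \<bullet> v)\<^sup>2 \<partial>M) \<ge> (lam / c)\<^sup>2"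
proof -
  interpret prob_space M by fact
  have "glm_hessian M phi2 w \<noteq> 0"
    using assms(8-10) by auto
  note integrable_hessian = integrable_glm_hessian_integrand[OF this]
  have "v \<bullet> (glm_hessian M phi2 w *v v) = lam"
    using assms(8,9) by (simp add: norm_eq_sqrt_inner)
  then have lam_eq: "lam = (\<integral> z. phi2 (w \<bullet> z) * (z \<bullet> v)\<^sup>2 \<partial>M)"
    using glm_hessian_quadratic_form[OF integrable_hessian] by simp
  have cont: "continuous_on UNIV phi1"
    using assms(5) by (meson DERIV_isCont continuous_at_imp_continuous_on)
  define E where "E = (\<integral> z. \<bar>stoch_grad phi1 z w \<bullet> v\<bar> \<partial>M)"
  have "-lam \<le> c * E"
    using abs_integral_curvature_le[OF assms(1-3) cont _ assms(7,8)
        integrable_glm_curvature[OF integrable_hessian]] lam_eq assms(6,10)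
    by (simp add: E_def)
  then have "lam\<^sup>2 \<le> c\<^sup>2 * E\<^sup>2"
    using assms(10) by (simp add: power_mult_distrib[symmetric] abs_le_square_iff[symmetric])
  also have "E\<^sup>2 \<le> (\<integral> z. \<bar>stoch_grad phi1 z w \<bullet> v\<bar>\<^sup>2 \<partial>M)"
    unfolding E_def
    by (intro square_integral_le_integral_square integrable_continuous_on_unit_ball[OF assms(1-3)]
        continuous_intros continuous_on_stoch_grad_inner cont)
  finally have "lam\<^sup>2 \<le> c\<^sup>2 * (\<integral> z. (stoch_grad phi1 z w \<bullet> v)\<^sup>2 \<partial>M)"
    by (simp add: power2_abs mult_left_mono)
  then show ?thesis
    using assms(6) by (simp add: power_divide divide_le_eq mult.commute)
qed

end
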